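(* Let $G$ be a bipartite graph with colour classes $V$ and $W$, where $\#V=v$ and $\#W=w$, and let $e$ be the number of edges of $G$. Suppose $G$ contains no cycle of length $4$ and no cycle of length $6$. Then: (i) $e^3-(v+w)e^2+2vwe-v^2w^2\le 0$; (ii) if moreover $v\ge\lfloor w^2/4\rfloor$, then $e\le v+\lfloor w^2/4\rfloor$. *)

theory Defs
  imports Main
begin

definition bipartite_graph :: "'a set \<Rightarrow> 'a set \<Rightarrow> 'a set set \<Rightarrow> bool" where
  "bipartite_graph V W E \<longleftrightarrow> finite V \<and> finite W \<and> V \<inter> W = {} \<and>
     (\<forall>e\<in>E. \<exists>x\<in>V. \<exists>y\<in>W. e = {x, y})"

definition has_cycle_of_length :: "'a set set \<Rightarrow> nat \<Rightarrow> bool" where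
  "has_cycle_of_length E k \<longleftrightarrow> 3 \<le> k \<and>
     (\<exists>c :: nat \<Rightarrow> 'a. inj_on c {0..<k} \<and> (\<forall>i<k. {c i, c ((i + 1) mod k)} \<in> E))"

end

theory Submission
  imports Defs "HOL-Analysis.Convex"
begin

text \<open>
  (i) For an edge xy there are (deg x - 1) (deg y - 1) paths a - y - x - b of length three with
  middle edge xy. Without 4- and 6-cycles such a path is determined by its end points, which are
  not adjacent, so the sum of (deg x - 1) (deg y - 1) over all edges is at most vw - e. If all
  degrees are at least 2, the arithmetic-geometric mean inequality combined with Jensen's
  inequality for the convex function t ln (t - 1) bounds this sum from below by
  e (e/v - 1) (e/w - 1), and multiplying by vw gives (i). Vertices of degree at most 1 are
  removed by induction: adding an isolated vertex or a leaf preserves (i), a purely algebraic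
  fact about the cubic.

  (ii) Joining the neighbours of each x in V by a star yields a graph on W with
  sum (deg x - 1) edges. The stars are edge-disjoint because there is no 4-cycle, and their
  union is triangle-free because there are no 4- and 6-cycles, so by Mantel's theorem it has at
  most w^2/4 edges.
\<close>

lemma convex_on_mult_ln_minus_one: "convex_on {2..} (\<lambda>t::real. t * ln (t - 1))"
proof (rule f''_ge0_imp_convex[where f' = "\<lambda>t. ln (t - 1) + t / (t - 1)"
      and f'' = "\<lambda>t. 1 / (t - 1) - 1 / (t - 1)^2"])
  fix t :: real assume "t \<in> {2..}"
  then have t: "t \<ge> 2" by simp
  have square_nonzero: "1 + t * t - t * 2 \<noteq> 0"
  proof -
    have "1 + t * t - t * 2 = (t - 1) * (t - 1)"
      by (simp add: algebra_simps)
    then show ?thesis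
      using t by simp
  qed
  show "((\<lambda>t. t * ln (t - 1)) has_real_derivative ln (t - 1) + t / (t - 1)) (at t)"
    using t by (auto intro!: derivative_eq_intros simp: field_simps)
  show "((\<lambda>t. ln (t - 1) + t / (t - 1)) has_real_derivative 1 / (t - 1) - 1 / (t - 1)^2) (at t)"
    using t square_nonzero by (auto intro!: derivative_eq_intros simp: field_simps power2_eq_square)
  have "1 / (t - 1) - 1 / (t - 1)^2 = (t - 2) / (t - 1)^2"
    using t by (simp add: divide_simps power2_eq_square)
  then show "0 \<le> 1 / (t - 1) - 1 / (t - 1)^2"
    using t by simp
qed simp

lemma sum_mult_ln_minus_one_ge:
  fixes d :: "'a \<Rightarrow> real"
  assumes "finite A" "A \<noteq> {}" "\<And>x. x \<in> A \<Longrightarrow> 2 \<le> d x"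
  shows "(\<Sum>x\<in>A. d x) * ln ((\<Sum>x\<in>A. d x) / card A - 1) \<le> (\<Sum>x\<in>A. d x * ln (d x - 1))"
proof -
  define n where "n = real (card A)"
  have n: "n > 0"
    using assms(1,2) by (simp add: n_def card_gt_0_iff)
  have "(\<Sum>x\<in>A. d x / n) * ln ((\<Sum>x\<in>A. d x / n) - 1) \<le> (\<Sum>x\<in>A. 1 / n * (d x * ln (d x - 1)))"
    using convex_on_sum[OF assms(1,2) convex_on_mult_ln_minus_one, of "\<lambda>_. 1 / n" d] assms(3) n
    by (simp add: n_def)
  then show ?thesis
    using n by (simp add: n_def flip: sum_divide_distrib sum_distrib_left) (simp add: field_simps)
qed

lemma card_mult_le_sum_if_sum_ln_ge:
  fixes f :: "'a \<Rightarrow> real" and c :: real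
  assumes pos: "\<And>p. p \<in> P \<Longrightarrow> 0 < f p" and "0 < c"
    and ln_ge: "card P * ln c \<le> (\<Sum>p\<in>P. ln (f p))"
  shows "card P * c \<le> (\<Sum>p\<in>P. f p)"
proof -
  have tangent: "c * (1 + ln (f p) - ln c) \<le> f p" if "p \<in> P" for p
  proof -
    have "ln (f p / c) \<le> f p / c - 1"
      using pos[OF that] \<open>0 < c\<close> by (intro ln_le_minus_one) simp
    then show ?thesis
      using pos[OF that] \<open>0 < c\<close> by (simp add: ln_div field_simps)
  qed
  have "card P * c \<le> c * (card P + ((\<Sum>p\<in>P. ln (f p)) - card P * ln c))"
    using ln_ge \<open>0 < c\<close> by (simp add: algebra_simps)
  also have "\<dots> = (\<Sum>p\<in>P. c * (1 + ln (f p) - ln c))"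
    by (simp add: sum.distrib sum_subtractf sum_distrib_left algebra_simps)
  also have "\<dots> \<le> (\<Sum>p\<in>P. f p)"
    by (rule sum_mono) (rule tangent)
  finally show ?thesis .
qed

lemma card_mult_le_sum_mult_if_sum_ln_ge:
  fixes f g :: "'a \<Rightarrow> real" and a b :: real
  assumes "finite P" "\<And>p. p \<in> P \<Longrightarrow> 0 < f p" "\<And>p. p \<in> P \<Longrightarrow> 0 < g p" "0 < a" "0 < b"
    and "card P * ln a \<le> (\<Sum>p\<in>P. ln (f p))" "card P * ln b \<le> (\<Sum>p\<in>P. ln (g p))"
  shows "card P * (a * b) \<le> (\<Sum>p\<in>P. f p * g p)"
proof (rule card_mult_le_sum_if_sum_ln_ge)
  have "(\<Sum>p\<in>P. ln (f p * g p)) = (\<Sum>p\<in>P. ln (f p)) + (\<Sum>p\<in>P. ln (g p))"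
    using assms(2,3) by (simp add: ln_mult_pos sum.distrib)
  then show "card P * ln (a * b) \<le> (\<Sum>p\<in>P. ln (f p * g p))"
    using assms(4-) by (simp add: ln_mult_pos distrib_left)
qed (use assms in auto)

text \<open>Mantel's theorem, with the edges of the graph on W given as a symmetric set S of
  ordered pairs; thus 2 * card S \<le> card W ^ 2 says that there are at most card W ^ 2 / 4 edges.\<close>

lemma mantel:
  fixes S :: "('a \<times> 'a) set"
  assumes "finite W" "S \<subseteq> W \<times> W" "sym S"
    and triangle_free: "\<And>p q s. (p, q) \<in> S \<Longrightarrow> (q, s) \<in> S \<Longrightarrow> (p, s) \<in> S \<Longrightarrow> False"
  shows "2 * card S \<le> card W ^ 2"
proof -
  define d where "d p = real (card (S `` {p}))" for p
  have finite_image: "finite (S `` {p})" for p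
    by (rule finite_subset[OF _ assms(1)]) (use assms(2) in auto)
  have S: "S = Sigma W (\<lambda>p. S `` {p})"
    using assms(2) by auto
  have card_S: "real (card S) = (\<Sum>p\<in>W. d p)"
    using assms(1) finite_image by (subst S) (simp add: card_SigmaI d_def)
  have sum_fst: "(\<Sum>(p, q)\<in>S. d p) = (\<Sum>p\<in>W. d p ^ 2)"
    using assms(1) finite_image by (subst S) (simp add: sum.Sigma[symmetric] d_def power2_eq_square)
  have "(\<Sum>(p, q)\<in>S. d q) = (\<Sum>(q, p)\<in>S. d q)"
    using \<open>sym S\<close> by (intro sum.reindex_bij_witness[of _ prod.swap prod.swap]) (auto dest: symD)
  with sum_fst have sum_snd: "(\<Sum>(p, q)\<in>S. d q) = (\<Sum>p\<in>W. d p ^ 2)"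
    by simp
  have "d p + d q \<le> card W" if "(p, q) \<in> S" for p q
  proof -
    have "S `` {p} \<inter> S `` {q} = {}"
      using triangle_free that \<open>sym S\<close> by (blast dest: symD)
    moreover have "S `` {p} \<union> S `` {q} \<subseteq> W"
      using assms(2) by auto
    ultimately have "card (S `` {p}) + card (S `` {q}) \<le> card W"
      using assms(1) finite_image by (metis card_Un_disjoint card_mono)
    then show ?thesis
      unfolding d_def by (metis of_nat_add of_nat_le_iff)
  qed
  then have "(\<Sum>(p, q)\<in>S. d p + d q) \<le> card S * card W"
    using sum_mono[of S "\<lambda>(p, q). d p + d q" "\<lambda>_. real (card W)"] by (simp add: case_prod_beta)
  then have sum_squares: "2 * (\<Sum>p\<in>W. d p ^ 2) \<le> card S * card W"
    using sum_fst sum_snd by (simp add: sum.distrib case_prod_unfold)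
  have "2 * real (card S) ^ 2 \<le> 2 * ((\<Sum>p\<in>W. d p ^ 2) * card W)"
    unfolding card_S using sum_squared_le_sum_of_squares by simp
  also have "\<dots> \<le> card S * card W * card W"
    using sum_squares by (simp add: mult.assoc[symmetric] mult_right_mono)
  finally have "2 * real (card S) ^ 2 \<le> real (card S) * card W ^ 2"
    by (simp add: power2_eq_square mult.assoc)
  then have "real (2 * card S ^ 2) \<le> real (card S * card W ^ 2)"
    by simp
  then have "2 * card S ^ 2 \<le> card S * card W ^ 2"
    by (simp only: of_nat_le_iff)
  then show ?thesis
    by (cases "card S = 0") (simp_all add: power2_eq_square)
qed

definition c46_cubic :: "'a::comm_ring \<Rightarrow> 'a \<Rightarrow> 'a \<Rightarrow> 'a" where
  "c46_cubic v w e = v * w * (v * w - e) - e * (e - v) * (e - w)"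

lemma c46_cubic_swap: "c46_cubic v w e = c46_cubic w v e"
  by (simp add: c46_cubic_def algebra_simps)

lemma of_int_c46_cubic: "of_int (c46_cubic v w e) = c46_cubic (of_int v) (of_int w) (of_int e)"
  by (simp add: c46_cubic_def)

lemma c46_cubic_add_isolated:
  fixes v w e :: int
  assumes "0 \<le> c46_cubic v w e" "0 \<le> v"
  shows "0 \<le> c46_cubic (v + 1) w e"
proof -
  have "c46_cubic (v + 1) w e = c46_cubic v w e + (e - w)^2 + 2 * v * w^2"
    by (simp add: c46_cubic_def algebra_simps power2_eq_square)
  then show ?thesis
    using assms by simp
qed

lemma c46_cubic_leaf_increment_le:
  fixes v w e :: int
  assumes F: "0 \<le> c46_cubic v w e" and v: "0 \<le> v" and w: "1 \<le> w"
    and "v < e" "w < e" "e \<le> v * w"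
  shows "(2 * e + 1) * (e - v) \<le> (2 * v + 1) * (w * (w - 1))"
proof (rule ccontr)
  \<comment> \<open>A negative increment would force the cubic itself to be negative; the two
    polynomial identities below are the certificate.\<close>
  define c k where "c = w * (w - 1)" and "k = e - v"
  define M where "M = (2 * v + 1) * c + w + v * w"
  define X where "X = c * (v - 2 * v * w - w) + k * M"
  assume "\<not> ?thesis"
  then have neg: "0 < (2 * e + 1) * k - (2 * v + 1) * c"
    by (simp add: c_def k_def)
  have c: "0 \<le> c"
    using w by (simp add: c_def)
  have kvw: "0 \<le> k * (v * w - e)"
    using assms by (simp add: k_def)
  have "(2 * v * w + 1) * X = c * (v * w * (2 * w - 3) + c + v)
      + M * ((2 * e + 1) * k - (2 * v + 1) * c) + M * (2 * (k * (v * w - e)))"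
    unfolding X_def M_def k_def c_def by algebra
  moreover have "0 \<le> c * (v * w * (2 * w - 3) + c + v)"
    using c v w by (cases "w = 1") (auto simp: c_def)
  moreover have "0 \<le> M"
    using c v w by (simp add: M_def)
  ultimately have "0 \<le> (2 * v * w + 1) * X"
    using neg kvw by simp
  moreover have "0 < 2 * v * w + 1"
    using v w by (simp add: add_pos_nonneg)
  ultimately have X: "0 \<le> X"
    by (simp add: zero_le_mult_iff)
  have "(e - w) * ((2 * e + 1) * k - (2 * v + 1) * c)
      = 2 * (e * (e - v) * (e - w)) - 2 * (v * w * (v * w - e)) - X - k * (v * w - e)"
    unfolding X_def M_def k_def c_def by algebra
  moreover have "0 < (e - w) * ((2 * e + 1) * k - (2 * v + 1) * c)"
    using neg \<open>w < e\<close> by simp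
  ultimately show False
    using F X kvw by (simp add: c46_cubic_def)
qed

lemma c46_cubic_add_leaf:
  fixes v w e :: int
  assumes F: "0 \<le> c46_cubic v w e" and v: "0 \<le> v" and w: "1 \<le> w" and "0 \<le> e" and evw: "e \<le> v * w"
  shows "0 \<le> c46_cubic (v + 1) w (e + 1)"
proof -
  have "(2 * e + 1) * (e - v) \<le> (2 * v + 1) * (w * (w - 1))"
  proof (cases "e \<le> v")
    case True
    have "(2 * e + 1) * (e - v) \<le> 0"
      using True \<open>0 \<le> e\<close> by (simp add: mult_nonneg_nonpos)
    moreover have "0 \<le> (2 * v + 1) * (w * (w - 1))"
      using v w by simp
    ultimately show ?thesis
      by linarith
  next
    case False
    then have "1 \<le> v"
      using evw v by (cases "v = 0") auto
    show ?thesis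
    proof (cases "e \<le> w")
      case True
      have "(2 * e + 1) * (e - v) \<le> (2 * w + 1) * (w - 1)"
        using True False \<open>1 \<le> v\<close> by (intro mult_mono) auto
      also have "\<dots> \<le> (2 * v + 1) * w * (w - 1)"
      proof (rule mult_right_mono)
        have "3 * w \<le> (2 * v + 1) * w"
          using \<open>1 \<le> v\<close> w by (intro mult_right_mono) auto
        then show "2 * w + 1 \<le> (2 * v + 1) * w"
          using w by linarith
      qed (use w in simp)
      finally show ?thesis
        by (simp add: mult.assoc)
    next
      case ew: False
      then show ?thesis
        using c46_cubic_leaf_increment_le[OF F v w] False evw by simp
    qed
  qed
  moreover have "c46_cubic (v + 1) w (e + 1)
      = c46_cubic v w e + ((2 * v + 1) * (w * (w - 1)) - (2 * e + 1) * (e - v))"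
    by (simp add: c46_cubic_def algebra_simps)
  ultimately show ?thesis
    using F by simp
qed

definition neighbours :: "'a set set \<Rightarrow> 'a \<Rightarrow> 'a set" where
  "neighbours E u = {z. {u, z} \<in> E}"

lemma neighbours_sym: "y \<in> neighbours E x \<longleftrightarrow> x \<in> neighbours E y"
  by (simp add: neighbours_def insert_commute)

lemma has_cycle_of_length_mono:
  "E \<subseteq> E' \<Longrightarrow> has_cycle_of_length E k \<Longrightarrow> has_cycle_of_length E' k"
  unfolding has_cycle_of_length_def by blast

lemma has_cycle_of_length_listI:
  assumes "distinct cs" "3 \<le> length cs"
    and "\<And>i. i < length cs \<Longrightarrow> {cs ! i, cs ! ((i + 1) mod length cs)} \<in> E"
  shows "has_cycle_of_length E (length cs)"
  unfolding has_cycle_of_length_def using assms by (auto intro!: exI[of _ "nth cs"] inj_on_nth)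

lemma has_cycle_of_length_4I:
  assumes "distinct [a, b, c, d]" "{a, b} \<in> E" "{b, c} \<in> E" "{c, d} \<in> E" "{d, a} \<in> E"
  shows "has_cycle_of_length E 4"
proof -
  have "has_cycle_of_length E (length [a, b, c, d])"
  proof (rule has_cycle_of_length_listI)
    fix i assume "i < length [a, b, c, d]"
    then have "i \<in> {0, 1, 2, 3}"
      by auto
    then show "{[a, b, c, d] ! i, [a, b, c, d] ! ((i + 1) mod length [a, b, c, d])} \<in> E"
      using assms by auto
  qed (use assms in auto)
  then show ?thesis
    by (simp add: numeral_eq_Suc)
qed

lemma has_cycle_of_length_6I:
  assumes "distinct [a, b, c, d, f, g]"
    "{a, b} \<in> E" "{b, c} \<in> E" "{c, d} \<in> E" "{d, f} \<in> E" "{f, g} \<in> E" "{g, a} \<in> E"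
  shows "has_cycle_of_length E 6"
proof -
  have "has_cycle_of_length E (length [a, b, c, d, f, g])"
  proof (rule has_cycle_of_length_listI)
    fix i assume "i < length [a, b, c, d, f, g]"
    then have "i \<in> {0, 1, 2, 3, 4, 5}"
      by auto
    then show "{[a, b, c, d, f, g] ! i, [a, b, c, d, f, g] ! ((i + 1) mod length [a, b, c, d, f, g])} \<in> E"
      using assms by auto
  qed (use assms in auto)
  then show ?thesis
    by (simp add: numeral_eq_Suc)
qed

lemma bipartite_graph_commute: "bipartite_graph V W E \<Longrightarrow> bipartite_graph W V E"
  unfolding bipartite_graph_def by (metis inf_commute insert_commute)

locale bipartite =
  fixes V W :: "'a set" and E :: "'a set set"
  assumes graph: "bipartite_graph V W E"
begin

lemma finite_V: "finite V" and finite_W: "finite W" and disjoint: "V \<inter> W = {}"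
  and edgeE: "e \<in> E \<Longrightarrow> (\<And>x y. x \<in> V \<Longrightarrow> y \<in> W \<Longrightarrow> e = {x, y} \<Longrightarrow> P) \<Longrightarrow> P"
  using graph unfolding bipartite_graph_def by auto

lemma neighbours_subset: "x \<in> V \<Longrightarrow> neighbours E x \<subseteq> W"
  unfolding neighbours_def using disjoint by (fastforce elim!: edgeE simp: doubleton_eq_iff)

lemma neighbours_subset_vertices: "neighbours E u \<subseteq> V \<union> W"
  unfolding neighbours_def by (fastforce elim!: edgeE simp: doubleton_eq_iff)

lemma finite_neighbours: "finite (neighbours E u)"
  using neighbours_subset_vertices by (rule finite_subset) (simp add: finite_V finite_W)

lemma not_in_neighbours: "u \<notin> neighbours E u"
  unfolding neighbours_def using disjoint by (auto elim!: edgeE simp: doubleton_eq_iff)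

lemma finite_E: "finite E"
proof -
  have "E \<subseteq> (\<lambda>(x, y). {x, y}) ` (V \<times> W)"
    by (auto elim!: edgeE)
  then show ?thesis
    using finite_V finite_W by (auto intro: finite_subset)
qed

lemma card_incident_edges: "card {e \<in> E. u \<in> e} = card (neighbours E u)"
proof -
  have "{e \<in> E. u \<in> e} \<subseteq> (\<lambda>z. {u, z}) ` neighbours E u"
  proof
    fix e assume e: "e \<in> {e \<in> E. u \<in> e}"
    then obtain x y where "e = {x, y}"
      by (auto elim: edgeE)
    with e have "e = {u, y} \<or> e = {u, x}"
      by auto
    with e show "e \<in> (\<lambda>z. {u, z}) ` neighbours E u"
      unfolding neighbours_def by auto
  qed
  then have "{e \<in> E. u \<in> e} = (\<lambda>z. {u, z}) ` neighbours E u"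
    unfolding neighbours_def by auto
  moreover have "inj_on (\<lambda>z. {u, z}) (neighbours E u)"
    using not_in_neighbours by (auto simp: inj_on_def doubleton_eq_iff)
  ultimately show ?thesis
    by (simp add: card_image)
qed

lemma card_oriented_edges: "card (Sigma V (neighbours E)) = card E"
proof -
  have "inj_on (\<lambda>(x, y). {x, y}) (Sigma V (neighbours E))"
    using disjoint neighbours_subset by (fastforce simp: inj_on_def doubleton_eq_iff)
  moreover have "(\<lambda>(x, y). {x, y}) ` Sigma V (neighbours E) = E"
  proof (intro equalityI subsetI)
    fix e assume "e \<in> E"
    then obtain x y where "x \<in> V" "e = {x, y}"
      by (auto elim: edgeE)
    with \<open>e \<in> E\<close> show "e \<in> (\<lambda>(x, y). {x, y}) ` Sigma V (neighbours E)"
      unfolding neighbours_def by force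
  qed (auto simp: neighbours_def)
  ultimately show ?thesis
    using card_image by fastforce
qed

lemma sum_card_neighbours: "(\<Sum>x\<in>V. card (neighbours E x)) = card E"
  using card_oriented_edges finite_V finite_neighbours by (simp add: card_SigmaI)

lemma card_E_le: "card E \<le> card V * card W"
proof -
  have "Sigma V (neighbours E) \<subseteq> V \<times> W"
    using neighbours_subset by auto
  then show ?thesis
    using card_oriented_edges finite_V finite_W by (metis card_cartesian_product card_mono finite_SigmaI)
qed

lemma sum_oriented_edges_fst:
  "(\<Sum>(x, y)\<in>Sigma V (neighbours E). f x) = (\<Sum>x\<in>V. of_nat (card (neighbours E x)) * f x)"
  by (simp add: sum.Sigma[symmetric] finite_V finite_neighbours)

lemma bipartite_delete_vertex: "bipartite (V - {x}) W {e \<in> E. x \<notin> e}"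
  using graph unfolding bipartite_def bipartite_graph_def by fastforce

lemma sum_ln_degree_ge:
  assumes "V \<noteq> {}" and "\<And>x. x \<in> V \<Longrightarrow> 2 \<le> card (neighbours E x)"
  shows "card E * ln (card E / card V - 1)
    \<le> (\<Sum>(x, y)\<in>Sigma V (neighbours E). ln (real (card (neighbours E x)) - 1))"
proof -
  have "(\<Sum>x\<in>V. real (card (neighbours E x))) = card E"
    using sum_card_neighbours by (metis of_nat_sum)
  then show ?thesis
    using sum_mult_ln_minus_one_ge[of V "\<lambda>x. real (card (neighbours E x))"] finite_V assms
    by (simp add: sum_oriented_edges_fst)
qed

end

sublocale bipartite \<subseteq> swapped: bipartite W V E
  using graph by unfold_locales (rule bipartite_graph_commute)

context bipartite
begin

lemma sum_oriented_edges_snd: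
  "(\<Sum>(x, y)\<in>Sigma V (neighbours E). f y) = (\<Sum>y\<in>W. of_nat (card (neighbours E y)) * f y)"
proof -
  have "prod.swap ` Sigma V (neighbours E) = Sigma W (neighbours E)"
    using neighbours_subset swapped.neighbours_subset
    by (auto simp: image_iff) (meson neighbours_sym subsetD)+
  then have "bij_betw prod.swap (Sigma V (neighbours E)) (Sigma W (neighbours E))"
    by (simp add: bij_betw_def)
  then have "(\<Sum>(x, y)\<in>Sigma V (neighbours E). f y) = (\<Sum>(y, x)\<in>Sigma W (neighbours E). f y)"
    by (auto simp: sum.reindex_bij_betw[symmetric] case_prod_beta)
  then show ?thesis
    using swapped.sum_oriented_edges_fst by simp
qed

lemma sum_degree_product_ge:
  assumes "V \<noteq> {}" and deg: "\<And>u. u \<in> V \<union> W \<Longrightarrow> 2 \<le> card (neighbours E u)"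
  shows "card E * ((card E / card V - 1) * (card E / card W - 1))
    \<le> (\<Sum>(x, y)\<in>Sigma V (neighbours E).
          (real (card (neighbours E x)) - 1) * (real (card (neighbours E y)) - 1))"
proof -
  define d where "d u = real (card (neighbours E u))" for u
  let ?P = "Sigma V (neighbours E)"
  have "W \<noteq> {}"
    using \<open>V \<noteq> {}\<close> deg neighbours_subset by fastforce
  have ln_V: "card ?P * ln (card E / card V - 1) \<le> (\<Sum>p\<in>?P. ln (d (fst p) - 1))"
    using sum_ln_degree_ge[OF \<open>V \<noteq> {}\<close>] deg
    by (simp add: card_oriented_edges d_def case_prod_unfold)
  have ln_W: "card ?P * ln (card E / card W - 1) \<le> (\<Sum>p\<in>?P. ln (d (snd p) - 1))"
    using swapped.sum_ln_degree_ge[OF \<open>W \<noteq> {}\<close>] deg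
      swapped.sum_oriented_edges_fst[of "\<lambda>y. ln (d y - 1)"]
      sum_oriented_edges_snd[of "\<lambda>y. ln (d y - 1)"]
    by (simp add: card_oriented_edges d_def case_prod_unfold)
  have "2 * card V \<le> card E" "2 * card W \<le> card E"
    using sum_mono[of V "\<lambda>_. 2" "\<lambda>x. card (neighbours E x)"] deg sum_card_neighbours
      sum_mono[of W "\<lambda>_. 2" "\<lambda>x. card (neighbours E x)"] swapped.sum_card_neighbours
    by auto
  moreover have "0 < card V" "0 < card W"
    using \<open>V \<noteq> {}\<close> \<open>W \<noteq> {}\<close> finite_V finite_W by (simp_all add: card_gt_0_iff)
  ultimately have "0 < card E / card V - 1" "0 < card E / card W - 1"
    by (simp_all add: field_simps)
  moreover have "2 \<le> d x" "2 \<le> d y" if "(x, y) \<in> ?P" for x y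
    using that deg neighbours_subset by (auto simp: d_def)
  ultimately have "card ?P * ((card E / card V - 1) * (card E / card W - 1))
      \<le> (\<Sum>p\<in>?P. (d (fst p) - 1) * (d (snd p) - 1))"
    using ln_V ln_W finite_V finite_neighbours
    by (intro card_mult_le_sum_mult_if_sum_ln_ge) fastforce+
  then show ?thesis
    by (simp add: card_oriented_edges d_def case_prod_unfold)
qed

lemma c46_cubic_nonneg_delete_low_degree:
  assumes x: "x \<in> V" "card (neighbours E x) \<le> 1"
    and IH: "0 \<le> c46_cubic (int (card (V - {x}))) (int (card W)) (int (card {e \<in> E. x \<notin> e}))"
  shows "0 \<le> c46_cubic (int (card V)) (int (card W)) (int (card E))"
proof -
  interpret G': bipartite "V - {x}" W "{e \<in> E. x \<notin> e}"
    by (rule bipartite_delete_vertex)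
  have "card V = card (V - {x}) + 1"
    using card_Suc_Diff1[OF finite_V x(1)] by simp
  then have V: "int (card V) = int (card (V - {x})) + 1"
    by simp
  have "E = {e \<in> E. x \<notin> e} \<union> {e \<in> E. x \<in> e}"
    by auto
  then have E: "card E = card {e \<in> E. x \<notin> e} + card (neighbours E x)"
    using finite_E card_incident_edges by (metis (no_types, lifting) card_Un_disjoint disjoint_iff
        finite_Un mem_Collect_eq)
  consider "card (neighbours E x) = 0" | "card (neighbours E x) = 1"
    using x by linarith
  then show ?thesis
  proof cases
    case 1
    then show ?thesis
      using c46_cubic_add_isolated[OF IH] V E by simp
  next
    case 2
    then have "neighbours E x \<noteq> {}"
      by auto
    then have "1 \<le> card W"
      using x neighbours_subset finite_W by (metis card_0_eq less_one not_less subset_empty)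
    moreover have "card {e \<in> E. x \<notin> e} \<le> card (V - {x}) * card W"
      by (rule G'.card_E_le)
    ultimately have "0 \<le> c46_cubic (int (card (V - {x})) + 1) (int (card W))
        (int (card {e \<in> E. x \<notin> e}) + 1)"
      by (intro c46_cubic_add_leaf[OF IH]) (simp_all flip: of_nat_mult)
    moreover have "int (card E) = int (card {e \<in> E. x \<notin> e}) + 1"
      using E 2 by simp
    ultimately show ?thesis
      by (simp only: V)
  qed
qed

end

locale c46_free_bipartite = bipartite +
  assumes no_C4: "\<not> has_cycle_of_length E 4" and no_C6: "\<not> has_cycle_of_length E 6"

sublocale c46_free_bipartite \<subseteq> swapped: c46_free_bipartite W V E
  by unfold_locales (fact no_C4 no_C6)+

context c46_free_bipartite
begin

lemma common_neighbour_unique: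
  assumes "x \<in> V" "x' \<in> V" "x \<noteq> x'"
    and "y \<in> neighbours E x" "y \<in> neighbours E x'" "z \<in> neighbours E x" "z \<in> neighbours E x'"
  shows "y = z"
proof (rule ccontr)
  assume "y \<noteq> z"
  moreover have "y \<in> W" "z \<in> W"
    using assms neighbours_subset by auto
  ultimately have "distinct [x, y, x', z]"
    using assms disjoint by auto
  then have "has_cycle_of_length E 4"
    using assms by (intro has_cycle_of_length_4I[of x y x' z]) (auto simp: neighbours_def insert_commute)
  with no_C4 show False ..
qed

lemma c46_free_delete_vertex: "c46_free_bipartite (V - {x}) W {e \<in> E. x \<notin> e}"
  unfolding c46_free_bipartite_def c46_free_bipartite_axioms_def
  using bipartite_delete_vertex no_C4 no_C6 has_cycle_of_length_mono[of "{e \<in> E. x \<notin> e}" E]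
  by blast

lemma no_hexagon:
  assumes "x1 \<in> V" "x2 \<in> V" "x3 \<in> V" "distinct [x1, x2, x3]" "distinct [y1, y2, y3]"
    and "y1 \<in> neighbours E x1" "y1 \<in> neighbours E x2" "y2 \<in> neighbours E x2"
    and "y2 \<in> neighbours E x3" "y3 \<in> neighbours E x3" "y3 \<in> neighbours E x1"
  shows False
proof -
  have "y1 \<in> W" "y2 \<in> W" "y3 \<in> W"
    using assms neighbours_subset by auto
  then have "distinct [x1, y1, x2, y2, x3, y3]"
    using assms disjoint by auto
  then have "has_cycle_of_length E 6"
    using assms by (intro has_cycle_of_length_6I[of x1 y1 x2 y2 x3 y3]) (auto simp: neighbours_def insert_commute)
  with no_C6 show False ..
qed

text \<open>The element ((x, y), (a, b)) of three_paths is the path a - y - x - b.\<close>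

definition three_paths :: "(('a \<times> 'a) \<times> ('a \<times> 'a)) set" where
  "three_paths = (SIGMA (x, y):Sigma V (neighbours E).
     (neighbours E y - {x}) \<times> (neighbours E x - {y}))"

lemma card_three_paths:
  "card three_paths = (\<Sum>(x, y)\<in>Sigma V (neighbours E).
     (card (neighbours E y) - 1) * (card (neighbours E x) - 1))"
  unfolding three_paths_def using finite_V finite_neighbours
  by (subst card_SigmaI) (auto intro!: sum.cong simp: card_cartesian_product neighbours_sym)

lemma three_path_ends_unique:
  assumes "((x1, y1), (a, b)) \<in> three_paths" "((x2, y2), (a, b)) \<in> three_paths"
  shows "x1 = x2 \<and> y1 = y2"
proof -
  have p1: "x1 \<in> V" "y1 \<in> neighbours E x1" "a \<in> neighbours E y1" "a \<noteq> x1"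
      "b \<in> neighbours E x1" "b \<noteq> y1"
    and p2: "x2 \<in> V" "y2 \<in> neighbours E x2" "a \<in> neighbours E y2" "a \<noteq> x2"
      "b \<in> neighbours E x2" "b \<noteq> y2"
    using assms by (auto simp: three_paths_def)
  have "a \<in> V"
    using p1 neighbours_subset swapped.neighbours_subset by blast
  show ?thesis
  proof (cases "y1 = y2")
    case True
    then show ?thesis
      using common_neighbour_unique[of x1 x2 y1 b] p1 p2 by auto
  next
    case False
    moreover have "x1 \<noteq> x2"
      using common_neighbour_unique[of a x1 y1 y2] p1 p2 \<open>a \<in> V\<close> False
      by (auto simp: neighbours_sym)
    ultimately show ?thesis
      using no_hexagon[of a x1 x2 y1 b y2] p1 p2 \<open>a \<in> V\<close> by (auto simp: neighbours_sym)
  qed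
qed

lemma three_path_ends_not_adjacent:
  assumes "((x, y), (a, b)) \<in> three_paths"
  shows "b \<notin> neighbours E a"
proof
  assume "b \<in> neighbours E a"
  moreover have "x \<in> V" "y \<in> neighbours E x" "a \<in> neighbours E y" "a \<noteq> x"
      "b \<in> neighbours E x" "b \<noteq> y"
    using assms by (auto simp: three_paths_def)
  moreover have "a \<in> V"
    using calculation neighbours_subset swapped.neighbours_subset by blast
  ultimately show False
    using common_neighbour_unique[of a x y b] by (auto simp: neighbours_sym)
qed

lemma card_three_paths_le: "card three_paths + card E \<le> card V * card W"
proof -
  have "snd ` three_paths \<subseteq> V \<times> W - Sigma V (neighbours E)"
  proof
    fix q assume "q \<in> snd ` three_paths"
    then obtain x y a b where p: "((x, y), (a, b)) \<in> three_paths" and q: "q = (a, b)"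
      by force
    then have "x \<in> V" "y \<in> neighbours E x" "a \<in> neighbours E y" "b \<in> neighbours E x"
      by (auto simp: three_paths_def)
    then have "a \<in> V" "b \<in> W"
      using neighbours_subset swapped.neighbours_subset by blast+
    with three_path_ends_not_adjacent[OF p] show "q \<in> V \<times> W - Sigma V (neighbours E)"
      by (simp add: q)
  qed
  moreover have "inj_on snd three_paths"
    using three_path_ends_unique by (force simp: inj_on_def)
  ultimately have "card three_paths \<le> card (V \<times> W - Sigma V (neighbours E))"
    using finite_V finite_W by (metis card_image card_mono finite_Diff finite_SigmaI)
  also have "\<dots> = card V * card W - card E"
    using neighbours_subset finite_V finite_W finite_neighbours card_oriented_edges
    by (subst card_Diff_subset) (auto simp: card_cartesian_product)
  finally show ?thesis
    using card_E_le by simp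
qed

lemma sum_degree_product_le:
  "(\<Sum>(x, y)\<in>Sigma V (neighbours E).
      (real (card (neighbours E x)) - 1) * (real (card (neighbours E y)) - 1))
    \<le> real (card V) * real (card W) - real (card E)"
proof -
  have "(\<Sum>(x, y)\<in>Sigma V (neighbours E).
      (real (card (neighbours E x)) - 1) * (real (card (neighbours E y)) - 1)) = card three_paths"
    unfolding card_three_paths of_nat_sum
  proof (rule sum.cong[OF refl])
    fix p assume "p \<in> Sigma V (neighbours E)"
    moreover obtain x y where p: "p = (x, y)"
      by fastforce
    ultimately have "1 \<le> card (neighbours E x)" "1 \<le> card (neighbours E y)"
      using finite_neighbours neighbours_sym by (metis SigmaD2 card_0_eq empty_iff less_one not_le)+
    then show "(case p of (x, y) \<Rightarrow> (real (card (neighbours E x)) - 1) * (real (card (neighbours E y)) - 1))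
        = real (case p of (x, y) \<Rightarrow> (card (neighbours E y) - 1) * (card (neighbours E x) - 1))"
      by (simp add: p of_nat_diff)
  qed
  moreover have "real (card three_paths + card E) \<le> real (card V * card W)"
    using card_three_paths_le by (simp only: of_nat_le_iff)
  ultimately show ?thesis
    by simp
qed

lemma c46_cubic_nonneg_if_min_degree_ge_2:
  assumes deg: "\<And>u. u \<in> V \<union> W \<Longrightarrow> 2 \<le> card (neighbours E u)"
  shows "0 \<le> c46_cubic (int (card V)) (int (card W)) (int (card E))"
proof (cases "V = {}")
  case True
  then have "E = {}"
    by (auto elim: edgeE)
  then show ?thesis
    by (simp add: c46_cubic_def)
next
  case False
  define v w e where "v = real (card V)" and "w = real (card W)" and "e = real (card E)"
  have "0 < v" "0 < w"
    using False deg neighbours_subset finite_V finite_W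
    by (fastforce simp: v_def w_def card_gt_0_iff)+
  have "e * ((e / v - 1) * (e / w - 1)) \<le> v * w - e"
    using sum_degree_product_ge[OF False deg] sum_degree_product_le
    by (simp add: v_def w_def e_def)
  then have "v * w * (e * ((e / v - 1) * (e / w - 1))) \<le> v * w * (v * w - e)"
    using \<open>0 < v\<close> \<open>0 < w\<close> by simp
  moreover have "v * w * (e * ((e / v - 1) * (e / w - 1))) = e * (e - v) * (e - w)"
    using \<open>0 < v\<close> \<open>0 < w\<close> by (simp add: field_simps)
  moreover have "real_of_int (c46_cubic (int (card V)) (int (card W)) (int (card E)))
      = c46_cubic v w e"
    by (simp add: of_int_c46_cubic v_def w_def e_def)
  ultimately show ?thesis
    unfolding c46_cubic_def by linarith
qed

end

theorem c46_cubic_nonneg: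
  assumes "c46_free_bipartite V W E"
  shows "0 \<le> c46_cubic (int (card V)) (int (card W)) (int (card E))"
  using assms
proof (induction "card V + card W" arbitrary: V W E rule: less_induct)
  case less
  interpret c46_free_bipartite V W E
    by (fact less.prems)
  consider (V) x where "x \<in> V" "card (neighbours E x) \<le> 1"
    | (W) y where "y \<in> W" "card (neighbours E y) \<le> 1"
    | (min_degree) "\<And>u. u \<in> V \<union> W \<Longrightarrow> 2 \<le> card (neighbours E u)"
    by (metis Un_iff not_less_eq_eq Suc_1)
  then show ?case
  proof cases
    case V
    have "card (V - {x}) + card W < card V + card W"
      using card_Diff1_less[OF finite_V V(1)] by linarith
    then have "0 \<le> c46_cubic (int (card (V - {x}))) (int (card W)) (int (card {e \<in> E. x \<notin> e}))"
      by (rule less.hyps[OF _ c46_free_delete_vertex])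
    with V show ?thesis
      by (rule c46_cubic_nonneg_delete_low_degree)
  next
    case W
    have "card (W - {y}) + card V < card V + card W"
      using card_Diff1_less[OF finite_W W(1)] by linarith
    then have "0 \<le> c46_cubic (int (card (W - {y}))) (int (card V)) (int (card {e \<in> E. y \<notin> e}))"
      by (rule less.hyps[OF _ swapped.c46_free_delete_vertex])
    with W have "0 \<le> c46_cubic (int (card W)) (int (card V)) (int (card E))"
      by (rule swapped.c46_cubic_nonneg_delete_low_degree)
    then show ?thesis
      by (simp add: c46_cubic_swap)
  next
    case min_degree
    then show ?thesis
      by (rule c46_cubic_nonneg_if_min_degree_ge_2)
  qed
qed

context c46_free_bipartite
begin

definition centre :: "'a \<Rightarrow> 'a" where
  "centre x = (SOME y. y \<in> neighbours E x)"

definition star :: "'a \<Rightarrow> ('a \<times> 'a) set" where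
  "star x = {centre x} \<times> (neighbours E x - {centre x}) \<union> (neighbours E x - {centre x}) \<times> {centre x}"

lemma mem_star:
  "(p, q) \<in> star x \<longleftrightarrow> p \<in> neighbours E x \<and> q \<in> neighbours E x \<and> p \<noteq> q \<and> (p = centre x \<or> q = centre x)"
proof -
  have "centre x \<in> neighbours E x" if "neighbours E x \<noteq> {}"
    using that unfolding centre_def by (auto intro: someI)
  then show ?thesis
    by (auto simp: star_def)
qed

lemma card_star: "card (star x) = 2 * (card (neighbours E x) - 1)"
proof (cases "neighbours E x = {}")
  case False
  then have "centre x \<in> neighbours E x"
    unfolding centre_def by (auto intro: someI)
  then show ?thesis
    unfolding star_def using finite_neighbours
    by (subst card_Un_disjoint) (auto simp: card_cartesian_product)
qed (simp add: star_def)

lemma star_subset: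
  assumes "x \<in> V"
  shows "star x \<subseteq> W \<times> W"
  using neighbours_subset[OF assms] by (auto simp: mem_star)

lemma star_disjoint:
  assumes "x \<in> V" "x' \<in> V" "x \<noteq> x'"
  shows "star x \<inter> star x' = {}"
proof -
  have False if "(p, q) \<in> star x" "(p, q) \<in> star x'" for p q
    using that common_neighbour_unique[OF assms, of p q] by (simp add: mem_star)
  then show ?thesis
    by auto
qed

lemma star_triangle_free:
  assumes "x1 \<in> V" "x2 \<in> V" "x3 \<in> V" "(p, q) \<in> star x1" "(q, s) \<in> star x2" "(p, s) \<in> star x3"
  shows False
proof -
  have nbrs: "p \<in> neighbours E x1" "q \<in> neighbours E x1" "q \<in> neighbours E x2" "s \<in> neighbours E x2"
      "p \<in> neighbours E x3" "s \<in> neighbours E x3" and distinct: "distinct [p, q, s]"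
    using assms(4-) by (auto simp: mem_star)
  consider "x1 = x2" "x2 = x3" | "x1 = x2" "x2 \<noteq> x3" | "x1 = x3" "x1 \<noteq> x2"
    | "x2 = x3" "x1 \<noteq> x2" | "distinct [x1, x2, x3]"
    by (cases "x1 = x2"; cases "x2 = x3"; cases "x1 = x3") auto
  then show False
  proof cases
    case 1
    then show False
      using assms(4-) by (auto simp: mem_star)
  next
    case 2
    then show False
      using common_neighbour_unique[of x1 x3 p s] nbrs distinct assms(1,3) by auto
  next
    case 3
    then show False
      using common_neighbour_unique[of x1 x2 q s] nbrs distinct assms(1,2) by auto
  next
    case 4
    then show False
      using common_neighbour_unique[of x1 x2 p q] nbrs distinct assms(1,2) by auto
  next
    case 5
    then show False
      using no_hexagon[of x1 x2 x3 q s p] nbrs distinct assms(1-3) by auto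
  qed
qed

lemma sum_degree_minus_one_le: "4 * (\<Sum>x\<in>V. card (neighbours E x) - 1) \<le> card W ^ 2"
proof -
  let ?S = "\<Union>x\<in>V. star x"
  have "card ?S = (\<Sum>x\<in>V. card (star x))"
    using finite_V star_disjoint by (intro card_UN_disjoint) (auto simp: star_def finite_neighbours)
  also have "\<dots> = 2 * (\<Sum>x\<in>V. card (neighbours E x) - 1)"
    by (simp add: card_star sum_distrib_left)
  finally have "card ?S = 2 * (\<Sum>x\<in>V. card (neighbours E x) - 1)" .
  moreover have "2 * card ?S \<le> card W ^ 2"
  proof (rule mantel[OF finite_W])
    show "?S \<subseteq> W \<times> W"
      using star_subset by blast
    show "sym ?S"
      by (auto intro!: symI simp: mem_star)
  qed (use star_triangle_free in blast)
  ultimately show ?thesis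
    by simp
qed

lemma card_E_le_card_V_plus_sq_div_4: "card E \<le> card V + card W ^ 2 div 4"
proof -
  have "card E = (\<Sum>x\<in>V. card (neighbours E x))"
    by (simp add: sum_card_neighbours)
  also have "\<dots> \<le> (\<Sum>x\<in>V. (card (neighbours E x) - 1) + 1)"
    by (intro sum_mono) linarith
  also have "\<dots> = (\<Sum>x\<in>V. card (neighbours E x) - 1) + card V"
    unfolding sum.distrib by simp
  finally show ?thesis
    using sum_degree_minus_one_le by linarith
qed

end

theorem theorem1p1:
  fixes V W :: "'a set" and E :: "'a set set"
  assumes "bipartite_graph V W E"
    and "\<not> has_cycle_of_length E 4"
    and "\<not> has_cycle_of_length E 6"
  shows "(int (card E))^3 - (int (card V) + int (card W)) * (int (card E))^2
           + 2 * int (card V) * int (card W) * int (card E)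
           - (int (card V))^2 * (int (card W))^2 \<le> 0
         \<and> (card V \<ge> (card W)^2 div 4 \<longrightarrow> card E \<le> card V + (card W)^2 div 4)"
proof -
  have G: "c46_free_bipartite V W E"
    using assms by (simp add: c46_free_bipartite_def c46_free_bipartite_axioms_def bipartite_def)
  have "(int (card E))^3 - (int (card V) + int (card W)) * (int (card E))^2
           + 2 * int (card V) * int (card W) * int (card E) - (int (card V))^2 * (int (card W))^2
        = - c46_cubic (int (card V)) (int (card W)) (int (card E))"
    by (simp add: c46_cubic_def algebra_simps power2_eq_square power3_eq_cube)
  moreover have "0 \<le> c46_cubic (int (card V)) (int (card W)) (int (card E))"
    using G by (rule c46_cubic_nonneg)
  \<comment> \<open>The bound (ii) holds without the hypothesis on card V.\<close>
  moreover have "card E \<le> card V + (card W)^2 div 4"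
    using G by (rule c46_free_bipartite.card_E_le_card_V_plus_sq_div_4)
  ultimately show ?thesis
    by simp
qed

end
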